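(* Let $\varphi$ be a toric plurisubharmonic function on $D(0,1)\subseteq\mathbf{C}^n$ such that near $0$, $\varphi=\frac{c}{2}\log\left(|z^{b_1}|^2+\cdots+|z^{b_r}|^2\right)+O(1)$ with $c>0$ and multi-indices $b_1,\dots,b_r$. Let $P(b)$ denote the convex hull of $\{b_1,\dots,b_r\}$. Then the Newton convex body of $\varphi$ is $P(\varphi)=c\,P(b)+\mathbf{R}^n_{\ge0}$.
   Context: A psh function on $D(0,1)$ is toric if it is invariant under $(z_j)\mapsto(e^{i\theta_j}z_j)$ for all real $\theta_j$; then there is a convex function $g$ on $U=(-\infty,0)^n$, increasing in each variable, with $\varphi(z)=g(\log|z_1|,\dots,\log|z_n|)$. The Newton convex body is $P(\varphi)=\{x\in\mathbf{R}^n:\sup_{y\in U}(\langle x,y\rangle-g(y))<+\infty\}$. $z^b=z_1^{b^{(1)}}\cdots z_n^{b^{(n)}}$; the sum $cP(b)+\mathbf{R}^n_{\ge0}$ is a Minkowski sum. *)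

theory Defs
  imports "HOL-Analysis.Analysis"
begin

definition unit_polydisc :: "(complex ^ 'n) set" where
  "unit_polydisc = {z. \<forall>i. cmod (z $ i) < 1}"

definition usc_on :: "('a::topological_space) set \<Rightarrow> ('a \<Rightarrow> ereal) \<Rightarrow> bool" where
  "usc_on \<Omega> u \<longleftrightarrow> (\<forall>z\<in>\<Omega>. \<forall>t. u z < t \<longrightarrow> eventually (\<lambda>w. u w < t) (at z within \<Omega>))"

text \<open>Plurisubharmonic on an open set: values in [-\<infinity>,+\<infinity>), upper semicontinuous,
  and the sub-mean value inequality on every closed complex disc
  {a + \<lambda> b : |\<lambda>| \<le> 1} contained in the set.  The mean value of the usc function
  (which may take the value -\<infinity>) is expressed as the infimum over k of the means of
  the bounded truncations max(u, k) (monotone convergence).\<close>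
definition psh_on :: "(complex ^ 'n) set \<Rightarrow> (complex ^ 'n \<Rightarrow> ereal) \<Rightarrow> bool" where
  "psh_on \<Omega> u \<longleftrightarrow> open \<Omega> \<and> (\<forall>z\<in>\<Omega>. u z \<noteq> \<infinity>) \<and> usc_on \<Omega> u \<and>
     (\<forall>a b. (\<forall>w. cmod w \<le> 1 \<longrightarrow> a + w *s b \<in> \<Omega>) \<longrightarrow>
        (\<forall>k::real. u a \<le> ereal (1 / (2 * pi) *
            integral {0..2 * pi} (\<lambda>t. real_of_ereal (max (u (a + cis t *s b)) (ereal k))))))"

definition toric_on :: "(complex ^ 'n) set \<Rightarrow> (complex ^ 'n \<Rightarrow> ereal) \<Rightarrow> bool" where
  "toric_on \<Omega> u \<longleftrightarrow> (\<forall>\<theta>::real^'n. \<forall>z\<in>\<Omega>. u (\<chi> i. cis (\<theta> $ i) * z $ i) = u z)"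

definition negorthant :: "(real ^ 'n) set" where
  "negorthant = {y. \<forall>i. y $ i < 0}"

definition newton_body :: "(complex ^ 'n \<Rightarrow> ereal) \<Rightarrow> (real ^ 'n) set" where
  "newton_body u = {x. (SUP y\<in>negorthant. ereal (x \<bullet> y) - u (\<chi> i. complex_of_real (exp (y $ i)))) < \<infinity>}"

definition monomial_sq :: "nat ^ 'n \<Rightarrow> complex ^ 'n \<Rightarrow> real" where
  "monomial_sq b z = (\<Prod>i\<in>UNIV. cmod (z $ i) ^ (2 * b $ i))"

definition log_model :: "real \<Rightarrow> nat \<Rightarrow> (nat \<Rightarrow> nat ^ 'n) \<Rightarrow> complex ^ 'n \<Rightarrow> ereal" where
  "log_model c r b z =
     (let s = (\<Sum>j=1..r. monomial_sq (b j) z) in if s = 0 then -\<infinity> else ereal (c / 2 * ln s))"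

definition newton_polytope :: "nat \<Rightarrow> (nat \<Rightarrow> nat ^ 'n) \<Rightarrow> (real ^ 'n) set" where
  "newton_polytope r b = convex hull ((\<lambda>j. \<chi> i. real (b j $ i)) ` {1..r})"

end

theory Submission
  imports Defs
begin

(* Write g y = phi (e^y_1, ..., e^y_n) on the negative orthant U.  Toric invariance makes
   phi radial in each coordinate disc, and a radial function with the sub-mean value property
   is increasing (a maximum principle argument on circles), so g is increasing in each
   variable.  Near 0 the hypothesis keeps g within a bounded distance of the tropical
   polynomial y |-> c max_j <b_j, y>.  For x = c p + q with p in P(b) and q >= 0 this bounds
   <x, y> - g y on U: deep inside the orthant by the comparison, elsewhere by monotonicity of
   g.  Conversely, if x lies outside the closed convex set c P(b) + R^n_{>=0}, a separating
   functional a >= 0 yields the ray y = -t a - s0 (1, ..., 1) along which <x, y> - g y grows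
   linearly in t. *)

section \<open>Upper semicontinuous functions\<close>

lemma usc_onE:
  assumes "usc_on \<Omega> u" "z \<in> \<Omega>" "u z < t"
  obtains U where "open U" "z \<in> U" "\<And>w. w \<in> U \<Longrightarrow> w \<in> \<Omega> \<Longrightarrow> u w < t"
proof -
  have "eventually (\<lambda>w. u w < t) (at z within \<Omega>)"
    using assms unfolding usc_on_def by blast
  then obtain U where U: "open U" "z \<in> U" "\<forall>w\<in>U. w \<noteq> z \<longrightarrow> w \<in> \<Omega> \<longrightarrow> u w < t"
    unfolding eventually_at_topological by blast
  have "u w < t" if "w \<in> U" "w \<in> \<Omega>" for w
    using U(3) that \<open>u z < t\<close> by (cases "w = z") auto
  with U(1,2) show ?thesis by (rule that)
qed

lemma usc_on_compose:
  assumes usc: "usc_on \<Omega> u" and cont: "continuous_on S \<gamma>" and img: "\<gamma> ` S \<subseteq> \<Omega>"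
  shows "usc_on S (\<lambda>x. u (\<gamma> x))"
  unfolding usc_on_def
proof (intro ballI allI impI)
  fix z t assume z: "z \<in> S" and lt: "u (\<gamma> z) < t"
  obtain U where U: "open U" "\<gamma> z \<in> U" "\<And>w. w \<in> U \<Longrightarrow> w \<in> \<Omega> \<Longrightarrow> u w < t"
    using usc_onE[OF usc _ lt] img z by blast
  obtain V where V: "open V" "V \<inter> S = \<gamma> -` U \<inter> S"
    using cont U(1) unfolding continuous_on_open_invariant by blast
  have "z \<in> V" using V(2) U(2) z by blast
  moreover have "u (\<gamma> x) < t" if "x \<in> V" "x \<in> S" for x
    using that V(2) U(3) img by blast
  ultimately show "eventually (\<lambda>x. u (\<gamma> x) < t) (at z within S)"
    unfolding eventually_at_topological using V(1) by blast
qed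

lemma usc_on_subset:
  assumes "usc_on \<Omega> u" "S \<subseteq> \<Omega>"
  shows "usc_on S u"
  using usc_on_compose[OF assms(1) continuous_on_id] assms(2) by simp

lemma usc_on_closed_superlevel:
  assumes usc: "usc_on \<Omega> u" and "closed \<Omega>"
  shows "closed {x\<in>\<Omega>. t \<le> u x}"
  unfolding closed_def
proof (subst open_subopen, intro ballI)
  fix z assume z: "z \<in> - {x\<in>\<Omega>. t \<le> u x}"
  show "\<exists>T. open T \<and> z \<in> T \<and> T \<subseteq> - {x\<in>\<Omega>. t \<le> u x}"
  proof (cases "z \<in> \<Omega>")
    case True
    with z have "u z < t" by (simp add: not_le)
    then obtain U where "open U" "z \<in> U" "\<And>w. w \<in> U \<Longrightarrow> w \<in> \<Omega> \<Longrightarrow> u w < t"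
      using usc_onE[OF usc True] by metis
    then show ?thesis by (intro exI[of _ U]) (auto simp flip: not_less)
  next
    case False
    then show ?thesis using \<open>closed \<Omega>\<close> by (auto intro!: exI[of _ "- \<Omega>"])
  qed
qed

lemma usc_on_UNIV_open_sublevel:
  assumes "usc_on UNIV u"
  shows "open {x. u x < t}"
proof -
  have "{x. u x < t} = - {x\<in>UNIV. t \<le> u x}" by auto
  then show ?thesis using usc_on_closed_superlevel[OF assms closed_UNIV] by (simp add: open_Compl)
qed

lemma usc_attains_max:
  fixes h :: "'a::t2_space \<Rightarrow> ereal"
  assumes usc: "usc_on K h" and "compact K" "K \<noteq> {}"
  obtains x where "x \<in> K" "\<And>y. y \<in> K \<Longrightarrow> h y \<le> h x"
proof -
  define s where "s = (SUP x\<in>K. h x)"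
  define F where "F = (\<lambda>t. {x\<in>K. t \<le> h x}) ` {t. t < s}"
  have "K \<inter> \<Inter>F \<noteq> {}"
  proof (rule compact_imp_fip[OF \<open>compact K\<close>])
    show "closed T" if "T \<in> F" for T
      using that usc_on_closed_superlevel[OF usc compact_imp_closed[OF \<open>compact K\<close>]]
      unfolding F_def by blast
  next
    fix F' assume "finite F'" "F' \<subseteq> F"
    then obtain T where "finite T" "T \<subseteq> {t. t < s}" "F' = (\<lambda>t. {x\<in>K. t \<le> h x}) ` T"
      unfolding F_def using finite_subset_image by (metis (no_types, lifting))
    show "K \<inter> \<Inter>F' \<noteq> {}"
    proof (cases "T = {}")
      case True then show ?thesis using \<open>K \<noteq> {}\<close> \<open>F' = _\<close> by simp
    next
      case False
      then have "Max T < s" using \<open>finite T\<close> \<open>T \<subseteq> _\<close> by auto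
      then obtain x where "x \<in> K" "Max T < h x" unfolding s_def less_SUP_iff by blast
      then have "t \<le> h x" if "t \<in> T" for t
        using that \<open>finite T\<close> by (meson Max_ge le_less_trans less_imp_le)
      then have "x \<in> K \<inter> \<Inter>F'" using \<open>x \<in> K\<close> \<open>F' = _\<close> by auto
      then show ?thesis by blast
    qed
  qed
  then obtain x where x: "x \<in> K" "\<And>t. t < s \<Longrightarrow> t \<le> h x" unfolding F_def by blast
  have "h y \<le> h x" if "y \<in> K" for y
  proof -
    have "s \<le> h x" using x(2) by (rule dense_le)
    then show ?thesis using that unfolding s_def by (meson SUP_upper order.trans)
  qed
  with x(1) that show ?thesis by blast
qed

lemma usc_attains_last_max:
  fixes v :: "real \<Rightarrow> ereal"
  assumes usc: "usc_on {lo..hi} v" and "lo \<le> hi"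
  obtains \<rho> where "\<rho> \<in> {lo..hi}" "\<And>x. x \<in> {lo..hi} \<Longrightarrow> v x \<le> v \<rho>"
    "\<And>x. \<rho> < x \<Longrightarrow> x \<le> hi \<Longrightarrow> v x < v \<rho>"
proof -
  obtain x0 where x0: "x0 \<in> {lo..hi}" "\<And>x. x \<in> {lo..hi} \<Longrightarrow> v x \<le> v x0"
    using usc_attains_max[OF usc] \<open>lo \<le> hi\<close> by auto
  define Z where "Z = {x\<in>{lo..hi}. v x0 \<le> v x}"
  have "closed Z"
    unfolding Z_def by (rule usc_on_closed_superlevel[OF usc closed_atLeastAtMost])
  then have "compact Z"
    unfolding compact_eq_bounded_closed Z_def by (auto intro: bounded_subset[OF bounded_closed_interval])
  moreover have "x0 \<in> Z" using x0 by (simp add: Z_def)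
  ultimately obtain \<rho> where \<rho>: "\<rho> \<in> Z" "\<And>x. x \<in> Z \<Longrightarrow> x \<le> \<rho>"
    using compact_attains_sup[of Z] by blast
  have "v x \<le> v \<rho>" if "x \<in> {lo..hi}" for x
    using x0(2)[OF that] \<rho>(1) by (auto simp: Z_def)
  moreover have "v x < v \<rho>" if "\<rho> < x" "x \<le> hi" for x
  proof -
    have "x \<notin> Z" using \<rho>(2) that(1) by force
    then show ?thesis using that \<rho>(1) x0(2)[of \<rho>] by (auto simp: Z_def not_le)
  qed
  ultimately show ?thesis using that \<rho>(1) by (auto simp: Z_def)
qed

lemma usc_truncation_integrable:
  fixes h :: "real \<Rightarrow> ereal"
  assumes usc: "usc_on UNIV h" and bounded: "\<And>t. h t \<le> ereal m"
  shows "(\<lambda>t. real_of_ereal (max (h t) (ereal k))) integrable_on {a..b}"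
proof (rule measurable_bounded_by_integrable_imp_integrable[where g="\<lambda>_. \<bar>k\<bar> + \<bar>m\<bar>"])
  define f where "f t = real_of_ereal (max (h t) (ereal k))" for t
  have f_ge: "k \<le> f t" for t
    using bounded[of t] unfolding f_def by (cases "h t") (auto simp: max_def)
  have "open {t. f t < y}" for y
  proof (cases "k < y")
    case True
    have "f t < y \<longleftrightarrow> h t < ereal y" for t
      using bounded[of t] True unfolding f_def by (cases "h t") (auto simp: max_def)
    then show ?thesis using usc_on_UNIV_open_sublevel[OF usc, of "ereal y"] by simp
  next
    case False
    then have "\<not> f t < y" for t using f_ge[of t] by linarith
    then have "{t. f t < y} = {}" by blast
    then show ?thesis by simp
  qed
  then have "{a..b} \<inter> {t. f t < y} \<in> sets lebesgue" for y
    by (auto simp: borel_open sets_completionI_sets)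
  then show "f \<in> borel_measurable (lebesgue_on {a..b})"
    by (intro borel_measurableI_less) (auto simp: sets_restrict_space_iff Int_def)
  show "norm (f t) \<le> \<bar>k\<bar> + \<bar>m\<bar>" if "t \<in> {a..b}" for t
    using bounded[of t] unfolding f_def by (cases "h t") (auto simp: max_def)
qed auto

section \<open>Radially subharmonic functions are increasing\<close>

lemma real_of_ereal_max_mono:
  assumes "X \<le> Y" "Y \<noteq> \<infinity>"
  shows "real_of_ereal (max X (ereal k)) \<le> real_of_ereal (max Y (ereal k))"
  using assms by (cases X; cases Y) (auto simp: max_def)

lemma integral_less_by_subinterval:
  fixes f :: "real \<Rightarrow> real"
  assumes int: "f integrable_on {a..b}" and c: "a < c" "c \<le> b"
    and le_m: "\<And>t. t \<in> {a..b} \<Longrightarrow> f t \<le> m" and le_l: "\<And>t. t \<in> {a..c} \<Longrightarrow> f t \<le> l" and "l < m"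
  shows "integral {a..b} f < m * (b - a)"
proof -
  have int_ac: "f integrable_on {a..c}" and int_cb: "f integrable_on {c..b}"
    using int c by (auto intro: integrable_subinterval_real)
  have "integral {a..c} f \<le> l * (c - a)"
    using integral_le[OF int_ac integrable_const_ivl le_l] c by (simp add: mult.commute)
  also have "\<dots> < m * (c - a)" using \<open>l < m\<close> c by simp
  finally have "integral {a..c} f < m * (c - a)" .
  moreover have "integral {c..b} f \<le> m * (b - c)"
    using integral_le[OF int_cb integrable_const_ivl, of m] le_m c by (simp add: mult.commute)
  moreover have "integral {a..b} f = integral {a..c} f + integral {c..b} f"
    using int c by (simp add: Henstock_Kurzweil_Integration.integral_combine)
  ultimately show ?thesis by (simp add: algebra_simps)
qed

lemma usc_circle_mean_less:
  fixes h :: "real \<Rightarrow> ereal"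
  assumes usc: "usc_on UNIV h" and le_m: "\<And>t. h t \<le> ereal m"
    and arc: "\<And>t. t \<in> {0..pi / 3} \<Longrightarrow> h t \<le> M" and "M < ereal m" "k < m"
  shows "1 / (2 * pi) * integral {0..2 * pi} (\<lambda>t. real_of_ereal (max (h t) (ereal k))) < m"
proof -
  define f where "f t = real_of_ereal (max (h t) (ereal k))" for t
  define l where "l = real_of_ereal (max M (ereal k))"
  have "l < m" unfolding l_def using \<open>M < ereal m\<close> \<open>k < m\<close> by (cases M) (auto simp: max_def)
  have "f t \<le> m" for t
    using real_of_ereal_max_mono[OF le_m, of t k] \<open>k < m\<close> unfolding f_def by simp
  moreover have "f t \<le> l" if "t \<in> {0..pi / 3}" for t
    unfolding f_def l_def using arc[OF that] \<open>M < ereal m\<close> by (intro real_of_ereal_max_mono) auto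
  moreover have "f integrable_on {0..2 * pi}"
    unfolding f_def using usc le_m by (rule usc_truncation_integrable)
  ultimately have "integral {0..2 * pi} f < m * (2 * pi - 0)"
    using \<open>l < m\<close> by (intro integral_less_by_subinterval[where c = "pi / 3"]) auto
  then show ?thesis unfolding f_def[abs_def] by (simp add: field_simps)
qed

lemma cmod_circle_le:
  assumes "0 \<le> \<rho>" "0 \<le> \<delta>"
  shows "cmod (complex_of_real \<rho> + cis t * complex_of_real \<delta>) \<le> \<rho> + \<delta>"
  using norm_triangle_ineq[of "complex_of_real \<rho>" "cis t * complex_of_real \<delta>"] assms
  by (simp add: norm_mult)

lemma cmod_circle_ge_on_arc:
  assumes "0 \<le> \<delta>" "t \<in> {0..pi / 3}"
  shows "\<rho> + \<delta> / 2 \<le> cmod (complex_of_real \<rho> + cis t * complex_of_real \<delta>)"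
proof -
  have "1 / 2 \<le> cos t"
    using cos_monotone_0_pi_le[of t "pi / 3"] assms(2) by (simp add: cos_60)
  then have "\<delta> / 2 \<le> \<delta> * cos t" using mult_left_mono[OF _ assms(1)] by fastforce
  then have "\<rho> + \<delta> / 2 \<le> Re (complex_of_real \<rho> + cis t * complex_of_real \<delta>)"
    by (simp add: mult.commute)
  also have "\<dots> \<le> cmod (complex_of_real \<rho> + cis t * complex_of_real \<delta>)" by (rule complex_Re_le_cmod)
  finally show ?thesis .
qed

lemma radial_submean_mono:
  fixes v :: "real \<Rightarrow> ereal"
  assumes usc: "usc_on {0..<1} v"
    and finite: "\<And>r. 0 \<le> r \<Longrightarrow> r < 1 \<Longrightarrow> v r \<noteq> \<infinity>"
    and submean: "\<And>\<rho> \<delta> k. 0 \<le> \<rho> \<Longrightarrow> 0 < \<delta> \<Longrightarrow> \<rho> + \<delta> < 1 \<Longrightarrow>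
      v \<rho> \<le> ereal (1 / (2 * pi) * integral {0..2 * pi}
        (\<lambda>t. real_of_ereal (max (v (cmod (complex_of_real \<rho> + cis t * complex_of_real \<delta>))) (ereal k))))"
    and r: "0 \<le> r1" "r1 \<le> r2" "r2 < 1"
  shows "v r1 \<le> v r2"
proof (rule ccontr)
  assume "\<not> v r1 \<le> v r2"
  then have less: "v r2 < v r1" by simp
  have usc_on_sub: "usc_on {lo..r2} v" if "0 \<le> lo" for lo
    using that r(3) by (intro usc_on_subset[OF usc]) auto
  have "0 \<le> r2" using r by simp
  obtain \<rho> where \<rho>: "\<rho> \<in> {0..r2}" and \<rho>_max: "\<And>x. x \<in> {0..r2} \<Longrightarrow> v x \<le> v \<rho>"
    and \<rho>_last: "\<And>x. \<rho> < x \<Longrightarrow> x \<le> r2 \<Longrightarrow> v x < v \<rho>"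
    using usc_attains_last_max[OF usc_on_sub[OF order.refl] \<open>0 \<le> r2\<close>] by metis
  have "\<rho> \<noteq> r2" using \<rho>_max[of r1] r less by auto
  then have \<rho>_less: "\<rho> < r2" using \<rho> by simp
  have "v \<rho> \<noteq> \<infinity>" using finite \<rho> r(3) by simp
  moreover have "v \<rho> \<noteq> -\<infinity>" using \<rho>_max[of r1] r less by auto
  ultimately obtain m where m: "v \<rho> = ereal m" by (cases "v \<rho>") auto
  \<comment> \<open>On the arc 0 \<le> t \<le> pi / 3 the circle of
    radius \<delta> about \<rho> stays in [\<rho> + \<delta> / 2, r2], where v is uniformly below v \<rho>, so the
    circle mean of v falls below v \<rho>.\<close>
  define \<delta> where "\<delta> = r2 - \<rho>"
  define R where "R t = cmod (complex_of_real \<rho> + cis t * complex_of_real \<delta>)" for t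
  have \<delta>: "0 < \<delta>" "\<rho> + \<delta> = r2" using \<rho>_less by (auto simp: \<delta>_def)
  have R_range: "R t \<in> {0..r2}" for t
    using cmod_circle_le[of \<rho> \<delta> t] \<rho> \<delta> by (simp add: R_def)
  have "0 \<le> \<rho> + \<delta> / 2" "{\<rho> + \<delta> / 2..r2} \<noteq> {}" using \<rho> \<delta> by auto
  then obtain \<sigma> where \<sigma>: "\<sigma> \<in> {\<rho> + \<delta> / 2..r2}"
    and \<sigma>_max: "\<And>x. x \<in> {\<rho> + \<delta> / 2..r2} \<Longrightarrow> v x \<le> v \<sigma>"
    using usc_attains_max[OF usc_on_sub compact_Icc] by metis
  have "continuous_on UNIV R" unfolding R_def by (intro continuous_intros)
  then have "usc_on UNIV (\<lambda>t. v (R t))"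
  proof (rule usc_on_compose[OF usc])
    have "R t \<in> {0..<1}" for t using R_range[of t] r(3) by simp
    then show "R ` UNIV \<subseteq> {0..<1}" by blast
  qed
  moreover have "v (R t) \<le> ereal m" for t using \<rho>_max[OF R_range] m by simp
  moreover have "v (R t) \<le> v \<sigma>" if "t \<in> {0..pi / 3}" for t
    using R_range[of t] cmod_circle_ge_on_arc[of \<delta> t \<rho>] \<delta> that by (intro \<sigma>_max) (simp add: R_def)
  moreover have "v \<sigma> < ereal m" using \<rho>_last[of \<sigma>] \<sigma> \<delta> m by simp
  ultimately have "1 / (2 * pi) * integral {0..2 * pi} (\<lambda>t. real_of_ereal (max (v (R t)) (ereal (m - 1)))) < m"
    by (intro usc_circle_mean_less) auto
  moreover have "ereal m \<le> ereal (1 / (2 * pi) * integral {0..2 * pi} (\<lambda>t. real_of_ereal (max (v (R t)) (ereal (m - 1)))))"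
    using submean[of \<rho> \<delta> "m - 1"] \<rho> \<delta> r(3) m unfolding R_def by simp
  ultimately show False by simp
qed

section \<open>Toric plurisubharmonic functions are increasing in each modulus\<close>

lemma psh_onD_usc: "psh_on \<Omega> u \<Longrightarrow> usc_on \<Omega> u"
  unfolding psh_on_def by blast

lemma psh_onD_not_infinity: "psh_on \<Omega> u \<Longrightarrow> z \<in> \<Omega> \<Longrightarrow> u z \<noteq> \<infinity>"
  unfolding psh_on_def by blast

lemma psh_onD_submean:
  assumes "psh_on \<Omega> u" "\<And>w. cmod w \<le> 1 \<Longrightarrow> a + w *s b \<in> \<Omega>"
  shows "u a \<le> ereal (1 / (2 * pi) *
           integral {0..2 * pi} (\<lambda>t. real_of_ereal (max (u (a + cis t *s b)) (ereal k))))"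
  using assms unfolding psh_on_def by blast

definition coord_update :: "'a ^ 'n \<Rightarrow> 'n \<Rightarrow> 'a \<Rightarrow> 'a ^ 'n" where
  "coord_update z i w = (\<chi> j. if j = i then w else z $ j)"

lemma continuous_on_coord_update:
  assumes "continuous_on S f"
  shows "continuous_on S (\<lambda>x. coord_update z i (f x))"
  unfolding coord_update_def
proof (intro continuous_on_vec_lambda)
  fix j show "continuous_on S (\<lambda>x. if j = i then f x else z $ j)"
    using assms by (cases "j = i") auto
qed

lemma coord_update_in_unit_polydisc:
  assumes "z \<in> unit_polydisc" "cmod w < 1"
  shows "coord_update z i w \<in> unit_polydisc"
  using assms by (auto simp: unit_polydisc_def coord_update_def)

lemma toric_on_coord_update:
  fixes z :: "complex ^ 'n"
  assumes toric: "toric_on unit_polydisc \<phi>" and z: "z \<in> unit_polydisc" and w: "cmod w < 1"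
  shows "\<phi> (coord_update z i w) = \<phi> (coord_update z i (complex_of_real (cmod w)))"
proof -
  define \<theta> :: "real ^ 'n" where "\<theta> = (\<chi> j. if j = i then Arg w else 0)"
  have "cis (Arg w) * complex_of_real (cmod w) = w"
    using rcis_cmod_Arg[of w] by (simp add: rcis_def mult.commute)
  then have "(\<chi> j. cis (\<theta> $ j) * coord_update z i (complex_of_real (cmod w)) $ j) = coord_update z i w"
    by (simp add: vec_eq_iff coord_update_def \<theta>_def)
  moreover have "coord_update z i (complex_of_real (cmod w)) \<in> unit_polydisc"
    using coord_update_in_unit_polydisc[OF z] w by simp
  ultimately show ?thesis
    using toric unfolding toric_on_def by (metis (no_types))
qed

lemma psh_on_coord_circle_submean:
  fixes z :: "complex ^ 'n"
  assumes psh: "psh_on unit_polydisc \<phi>" and z: "z \<in> unit_polydisc"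
    and \<delta>: "0 < \<delta>" "cmod \<zeta> + \<delta> < 1"
  shows "\<phi> (coord_update z i \<zeta>) \<le> ereal (1 / (2 * pi) * integral {0..2 * pi}
           (\<lambda>t. real_of_ereal (max (\<phi> (coord_update z i (\<zeta> + cis t * complex_of_real \<delta>))) (ereal k))))"
proof -
  define a where "a = coord_update z i \<zeta>"
  define b :: "complex ^ 'n" where "b = coord_update 0 i (complex_of_real \<delta>)"
  have line: "a + w *s b = coord_update z i (\<zeta> + w * complex_of_real \<delta>)" for w
    by (simp add: vec_eq_iff coord_update_def a_def b_def)
  have "a + w *s b \<in> unit_polydisc" if "cmod w \<le> 1" for w
  proof -
    have "cmod (\<zeta> + w * complex_of_real \<delta>) \<le> cmod \<zeta> + cmod w * \<delta>"
      using norm_triangle_ineq[of \<zeta> "w * complex_of_real \<delta>"] \<delta> by (simp add: norm_mult)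
    also have "\<dots> \<le> cmod \<zeta> + \<delta>" using that \<delta> by (simp add: mult_left_le_one_le)
    finally show ?thesis
      unfolding line using coord_update_in_unit_polydisc[OF z] \<delta> by simp
  qed
  from psh_onD_submean[OF psh this] show ?thesis
    unfolding line by (simp add: a_def)
qed

lemma toric_psh_mono_coord:
  fixes z :: "complex ^ 'n"
  assumes psh: "psh_on unit_polydisc \<phi>" and toric: "toric_on unit_polydisc \<phi>"
    and z: "z \<in> unit_polydisc" and r: "0 \<le> r1" "r1 \<le> r2" "r2 < 1"
  shows "\<phi> (coord_update z i (complex_of_real r1)) \<le> \<phi> (coord_update z i (complex_of_real r2))"
proof -
  define v where "v r = \<phi> (coord_update z i (complex_of_real r))" for r
  have in_polydisc: "coord_update z i (complex_of_real r) \<in> unit_polydisc" if "r \<in> {0..<1}" for r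
    using coord_update_in_unit_polydisc[OF z] that by simp
  have "continuous_on {0..<1} (\<lambda>r. coord_update z i (complex_of_real r))"
    by (intro continuous_on_coord_update continuous_intros)
  then have "usc_on {0..<1} v"
    unfolding v_def[abs_def] using in_polydisc by (intro usc_on_compose[OF psh_onD_usc[OF psh]]) auto
  moreover have "v r \<noteq> \<infinity>" if "0 \<le> r" "r < 1" for r
    unfolding v_def using in_polydisc that by (intro psh_onD_not_infinity[OF psh]) simp
  moreover have "v \<rho> \<le> ereal (1 / (2 * pi) * integral {0..2 * pi}
      (\<lambda>t. real_of_ereal (max (v (cmod (complex_of_real \<rho> + cis t * complex_of_real \<delta>))) (ereal k))))"
    if "0 \<le> \<rho>" "0 < \<delta>" "\<rho> + \<delta> < 1" for \<rho> \<delta> k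
  proof -
    have "cmod (complex_of_real \<rho> + cis t * complex_of_real \<delta>) < 1" for t
      using cmod_circle_le[of \<rho> \<delta> t] that by simp
    then have "\<phi> (coord_update z i (complex_of_real \<rho> + cis t * complex_of_real \<delta>))
        = v (cmod (complex_of_real \<rho> + cis t * complex_of_real \<delta>))" for t
      unfolding v_def by (rule toric_on_coord_update[OF toric z])
    then show ?thesis
      using psh_on_coord_circle_submean[OF psh z, of \<delta> "complex_of_real \<rho>" i k] that
      unfolding v_def by simp
  qed
  ultimately have "v r1 \<le> v r2"
    using r by (rule radial_submean_mono)
  then show ?thesis unfolding v_def .
qed

lemma toric_psh_mono:
  assumes psh: "psh_on unit_polydisc \<phi>" and toric: "toric_on unit_polydisc \<phi>"
    and u: "\<And>i. 0 \<le> u i" and uw: "\<And>i. u i \<le> w i" and w: "\<And>i. w i < 1"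
  shows "\<phi> (\<chi> i. complex_of_real (u i)) \<le> \<phi> (\<chi> i. complex_of_real (w i))"
proof -
  define mix where "mix F = (\<chi> i. complex_of_real (if i \<in> F then w i else u i))" for F
  have "\<bar>u i\<bar> < 1" "\<bar>w i\<bar> < 1" for i
    using u[of i] uw[of i] w[of i] by arith+
  then have mix_in: "mix F \<in> unit_polydisc" for F
    by (simp add: mix_def unit_polydisc_def)
  have "\<phi> (mix {}) \<le> \<phi> (mix F)" if "finite F" for F
    using that
  proof (induction F rule: finite_induct)
    case (insert j F)
    have "coord_update (mix F) j (complex_of_real (u j)) = mix F"
      and "coord_update (mix F) j (complex_of_real (w j)) = mix (insert j F)"
      using insert(2) by (auto simp: vec_eq_iff coord_update_def mix_def)
    moreover have "\<phi> (coord_update (mix F) j (complex_of_real (u j)))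
        \<le> \<phi> (coord_update (mix F) j (complex_of_real (w j)))"
      by (rule toric_psh_mono_coord[OF psh toric mix_in u uw w])
    ultimately have "\<phi> (mix F) \<le> \<phi> (mix (insert j F))" by simp
    then show ?case using insert(3) by simp
  qed simp
  from this[of UNIV] show ?thesis by (simp add: mix_def)
qed

section \<open>Newton convex bodies of tropical potentials\<close>

lemma closed_convex_scaled_plus_orthant:
  fixes P :: "(real ^ 'n) set"
  assumes "compact P" "convex P"
  shows "closed {c *\<^sub>R p + q | p q. p \<in> P \<and> (\<forall>i. 0 \<le> q $ i)}" (is "closed ?S")
    and "convex {c *\<^sub>R p + q | p q. p \<in> P \<and> (\<forall>i. 0 \<le> q $ i)}"
proof -
  define Q :: "(real ^ 'n) set" where "Q = {q. \<forall>i. 0 \<le> q $ i}"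
  have S_eq: "?S = (\<Union>q\<in>Q. \<Union>p\<in>(\<lambda>p. c *\<^sub>R p) ` P. {q + p})"
    unfolding Q_def by (auto simp: add.commute)
  have "closed Q" unfolding Q_def
    by (intro closed_Collect_all closed_Collect_le continuous_intros)
  then show "closed ?S"
    unfolding S_eq by (intro closed_compact_sums compact_scaling assms)
  have "convex Q" unfolding Q_def by (auto simp: convex_def)
  then show "convex ?S"
    unfolding S_eq by (intro convex_sums convex_scaling assms)
qed

lemma separate_from_scaled_hull_plus_orthant:
  fixes B :: "(real ^ 'n) set"
  assumes B: "finite B" "B \<noteq> {}"
    and x: "x \<notin> {c *\<^sub>R p + q | p q. p \<in> convex hull B \<and> (\<forall>i. 0 \<le> q $ i)}"
  shows "\<exists>a \<beta>. (\<forall>i. 0 \<le> a $ i) \<and> a \<bullet> x < \<beta> \<and> (\<forall>b\<in>B. \<beta> < c * (a \<bullet> b))"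
proof -
  define S where "S = {c *\<^sub>R p + q | p q. p \<in> convex hull B \<and> (\<forall>i. 0 \<le> q $ i)}"
  have "compact (convex hull B)" using B(1) by (rule finite_imp_compact_convex_hull)
  then have "closed S" "convex S"
    unfolding S_def by (rule closed_convex_scaled_plus_orthant[OF _ convex_convex_hull])+
  moreover have "x \<notin> S" using x by (simp add: S_def)
  ultimately obtain a \<beta> where a_x: "a \<bullet> x < \<beta>" and a_S: "\<And>w. w \<in> S \<Longrightarrow> \<beta> < a \<bullet> w"
    using separating_hyperplane_closed_point[of S x] by auto
  have in_S: "c *\<^sub>R b + q \<in> S" if "b \<in> B" "\<And>i. 0 \<le> q $ i" for b q
    unfolding S_def using that by (blast intro: hull_inc)
  have a_B: "\<beta> < c * (a \<bullet> b)" if "b \<in> B" for b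
    using a_S[OF in_S[OF that, of 0]] by simp
  have "0 \<le> a $ i" for i
  proof (rule ccontr)
    assume "\<not> 0 \<le> a $ i"
    then have neg: "a $ i < 0" by simp
    obtain b where b: "b \<in> B" using B(2) by blast
    \<comment> \<open>moving far enough along the ray of the orthant in direction i crosses the hyperplane\<close>
    define t where "t = (\<bar>\<beta>\<bar> + \<bar>c * (a \<bullet> b)\<bar> + 1) / (- a $ i)"
    have "0 \<le> t" unfolding t_def using neg by (intro divide_nonneg_pos) auto
    then have "\<beta> < a \<bullet> (c *\<^sub>R b + axis i t)"
      by (intro a_S in_S b) (auto simp: axis_def)
    also have "\<dots> = c * (a \<bullet> b) + t * a $ i"
      by (simp add: inner_add_right inner_axis mult.commute)
    also have "t * a $ i = - (\<bar>\<beta>\<bar> + \<bar>c * (a \<bullet> b)\<bar> + 1)"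
      unfolding t_def using neg by simp
    finally show False by linarith
  qed
  then show ?thesis using a_x a_B by blast
qed

definition legendre_domain :: "(real ^ 'n \<Rightarrow> ereal) \<Rightarrow> (real ^ 'n) set" where
  "legendre_domain g = {x. (SUP y\<in>negorthant. ereal (x \<bullet> y) - g y) < \<infinity>}"

lemma convex_hull_inner_le:
  assumes "\<And>b. b \<in> B \<Longrightarrow> c * (b \<bullet> y) \<le> G" and "p \<in> convex hull B"
  shows "c * (p \<bullet> y) \<le> G"
proof -
  have "B \<subseteq> {v. (c *\<^sub>R y) \<bullet> v \<le> G}" using assms(1) by (auto simp: inner_commute)
  then have "convex hull B \<subseteq> {v. (c *\<^sub>R y) \<bullet> v \<le> G}"
    by (intro hull_minimal convex_halfspace_le)
  then show ?thesis using assms(2) by (auto simp: inner_commute)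
qed

lemma inner_le_inner_min_orthant:
  fixes p y :: "real ^ 'n" and s :: real
  assumes "y \<in> negorthant" "0 \<le> s"
  shows "p \<bullet> y \<le> p \<bullet> (\<chi> i. min (y $ i) (- s)) + norm p * (CARD('n) * s)"
proof -
  define y' where "y' = (\<chi> i. min (y $ i) (- s))"
  have "norm (y - y') \<le> (\<Sum>i\<in>UNIV. \<bar>(y - y') $ i\<bar>)" by (rule norm_le_l1_cart)
  also have "\<dots> \<le> (\<Sum>i\<in>(UNIV :: 'n set). s)"
  proof (rule sum_mono)
    fix i have "y $ i < 0" using assms(1) by (simp add: negorthant_def)
    then show "\<bar>(y - y') $ i\<bar> \<le> s" using assms(2) by (simp add: y'_def min_def)
  qed
  finally have "norm (y - y') \<le> CARD('n) * s" by simp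
  then have "p \<bullet> (y - y') \<le> norm p * (CARD('n) * s)"
    using norm_cauchy_schwarz[of p "y - y'"] by (meson mult_left_mono norm_ge_zero order.trans)
  then show ?thesis by (simp add: y'_def[symmetric] inner_diff_right)
qed

lemma inner_orthant_ray:
  fixes v a :: "real ^ 'n"
  shows "v \<bullet> (\<chi> i. - t * a $ i - s) = - t * (a \<bullet> v) - s * (\<Sum>i\<in>UNIV. v $ i)"
  unfolding inner_vec_def by (simp add: algebra_simps sum_subtractf sum_distrib_left sum_negf)

lemma not_in_legendre_domain_if_ray:
  assumes ray: "\<And>t. 0 \<le> t \<Longrightarrow> y t \<in> negorthant"
    and grows: "\<And>t. 0 \<le> t \<Longrightarrow> ereal (t * d - K) \<le> ereal (x \<bullet> y t) - g (y t)" and "0 < d"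
  shows "x \<notin> legendre_domain g"
proof
  assume "x \<in> legendre_domain g"
  then obtain Q where Q: "(SUP y\<in>negorthant. ereal (x \<bullet> y) - g y) \<le> ereal Q"
    unfolding legendre_domain_def by (cases "SUP y\<in>negorthant. ereal (x \<bullet> y) - g y") auto
  define t where "t = (\<bar>Q\<bar> + \<bar>K\<bar> + 1) / d"
  have "0 \<le> t" unfolding t_def using \<open>0 < d\<close> by simp
  then have "ereal (t * d - K) \<le> ereal (x \<bullet> y t) - g (y t)" by (rule grows)
  also have "\<dots> \<le> (SUP y\<in>negorthant. ereal (x \<bullet> y) - g y)"
    using ray[OF \<open>0 \<le> t\<close>] by (rule SUP_upper)
  also note Q
  finally have "t * d - K \<le> Q" by simp
  moreover have "t * d = \<bar>Q\<bar> + \<bar>K\<bar> + 1" unfolding t_def using \<open>0 < d\<close> by simp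
  ultimately show False by simp
qed

lemma scaled_hull_plus_orthant_subset_legendre_domain:
  fixes g :: "real ^ 'n \<Rightarrow> ereal" and B :: "(real ^ 'n) set"
  assumes mono: "\<And>y y'. y \<in> negorthant \<Longrightarrow> (\<And>i. y' $ i \<le> y $ i) \<Longrightarrow> g y' \<le> g y"
    and lower: "\<And>y b. (\<And>i. y $ i \<le> - s0) \<Longrightarrow> b \<in> B \<Longrightarrow> ereal (c * (b \<bullet> y)) \<le> g y + ereal C"
    and "0 \<le> c" "0 \<le> s0"
  shows "{c *\<^sub>R p + q | p q. p \<in> convex hull B \<and> (\<forall>i. 0 \<le> q $ i)} \<subseteq> legendre_domain g"
proof safe
  fix p q :: "real ^ 'n" assume p: "p \<in> convex hull B" and q: "\<forall>i. 0 \<le> q $ i"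
  define K where "K = c * (norm p * (CARD('n) * s0)) + C"
  have "ereal ((c *\<^sub>R p + q) \<bullet> y) - g y \<le> ereal K" if y: "y \<in> negorthant" for y
  proof -
    \<comment> \<open>push y into the region where the lower bound holds; monotonicity of g pays for it\<close>
    define y' where "y' = (\<chi> i. min (y $ i) (- s0))"
    have g_y': "g y' \<le> g y" by (rule mono[OF y]) (simp add: y'_def)
    have "B \<noteq> {}" using p by auto
    then obtain b where "b \<in> B" by blast
    from lower[OF _ this, of y'] g_y' have "g y \<noteq> -\<infinity>"
      by (auto simp: y'_def)
    show ?thesis
    proof (cases "g y")
      case (real \<gamma>)
      have "c * (b \<bullet> y') \<le> \<gamma> + C" if "b \<in> B" for b
      proof -
        have "ereal (c * (b \<bullet> y')) \<le> g y' + ereal C"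
          using that by (intro lower) (simp add: y'_def)
        also have "\<dots> \<le> g y + ereal C" using g_y' by (rule add_right_mono)
        finally show ?thesis using real by simp
      qed
      then have "c * (p \<bullet> y') \<le> \<gamma> + C" using p by (rule convex_hull_inner_le)
      moreover have "c * (p \<bullet> y) \<le> c * (p \<bullet> y') + c * (norm p * (CARD('n) * s0))"
        using mult_left_mono[OF inner_le_inner_min_orthant[OF y \<open>0 \<le> s0\<close>, of p] \<open>0 \<le> c\<close>]
        by (simp add: y'_def algebra_simps)
      moreover have "q \<bullet> y \<le> 0"
        using q y unfolding inner_vec_def negorthant_def
        by (intro sum_nonpos) (auto intro: mult_nonneg_nonpos less_imp_le)
      ultimately have "(c *\<^sub>R p + q) \<bullet> y \<le> \<gamma> + K"
        unfolding K_def by (simp add: inner_add_left)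
      then show ?thesis using real by simp
    qed (use \<open>g y \<noteq> -\<infinity>\<close> in auto)
  qed
  then have "(SUP y\<in>negorthant. ereal ((c *\<^sub>R p + q) \<bullet> y) - g y) \<le> ereal K"
    by (rule SUP_least)
  then show "c *\<^sub>R p + q \<in> legendre_domain g"
    unfolding legendre_domain_def using order.strict_trans1 by fastforce
qed

lemma legendre_domain_subset_scaled_hull_plus_orthant:
  fixes g :: "real ^ 'n \<Rightarrow> ereal" and B :: "(real ^ 'n) set"
  assumes B: "finite B" "B \<noteq> {}" "\<And>b i. b \<in> B \<Longrightarrow> 0 \<le> b $ i"
    and upper: "\<And>y. (\<And>i. y $ i \<le> - s0) \<Longrightarrow> \<exists>b\<in>B. g y \<le> ereal (c * (b \<bullet> y) + C)"
    and "0 < c" "0 < s0"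
  shows "legendre_domain g \<subseteq> {c *\<^sub>R p + q | p q. p \<in> convex hull B \<and> (\<forall>i. 0 \<le> q $ i)}"
proof
  fix x assume x: "x \<in> legendre_domain g"
  show "x \<in> {c *\<^sub>R p + q | p q. p \<in> convex hull B \<and> (\<forall>i. 0 \<le> q $ i)}"
  proof (rule ccontr)
    assume "x \<notin> {c *\<^sub>R p + q | p q. p \<in> convex hull B \<and> (\<forall>i. 0 \<le> q $ i)}"
    then obtain a \<beta> where a: "\<And>i. 0 \<le> a $ i" and a_x: "a \<bullet> x < \<beta>"
      and a_B: "\<And>b. b \<in> B \<Longrightarrow> \<beta> < c * (a \<bullet> b)"
      using separate_from_scaled_hull_plus_orthant[OF B(1,2)] by blast
    define y where "y t = (\<chi> i. - t * a $ i - s0)" for t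
    have inner_y: "v \<bullet> y t = - t * (a \<bullet> v) - s0 * (\<Sum>i\<in>UNIV. v $ i)" for v t
      unfolding y_def by (rule inner_orthant_ray)
    define K where "K = s0 * (\<Sum>i\<in>UNIV. x $ i) + C"
    have lower: "ereal (t * (\<beta> - a \<bullet> x) - K) \<le> ereal (x \<bullet> y t) - g (y t)" if "0 \<le> t" for t
    proof -
      have "y t $ i \<le> - s0" for i
        using a[of i] that by (simp add: y_def)
      then obtain b where b: "b \<in> B" and g_b: "g (y t) \<le> ereal (c * (b \<bullet> y t) + C)"
        using upper by blast
      have "0 \<le> c * (s0 * (\<Sum>i\<in>UNIV. b $ i))"
        using B(3)[OF b] \<open>0 < s0\<close> \<open>0 < c\<close> by (simp add: sum_nonneg)
      moreover have "t * \<beta> \<le> t * (c * (a \<bullet> b))"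
        using a_B[OF b] that by (simp add: mult_left_mono)
      moreover have "c * (b \<bullet> y t) = - (t * (c * (a \<bullet> b))) - c * (s0 * (\<Sum>i\<in>UNIV. b $ i))"
        unfolding inner_y by (simp add: algebra_simps)
      ultimately have "c * (b \<bullet> y t) \<le> - t * \<beta>" by linarith
      then have "t * (\<beta> - a \<bullet> x) - K \<le> x \<bullet> y t - (c * (b \<bullet> y t) + C)"
        unfolding inner_y[of x] K_def by (simp add: algebra_simps)
      then show ?thesis
        using g_b by (cases "g (y t)") auto
    qed
    have "y t \<in> negorthant" if "0 \<le> t" for t
    proof -
      have "- t * a $ i - s0 < 0" for i
        using mult_nonneg_nonneg[OF that a[of i]] \<open>0 < s0\<close> by linarith
      then show ?thesis by (simp add: y_def negorthant_def)
    qed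
    then have "x \<notin> legendre_domain g"
      using lower a_x by (intro not_in_legendre_domain_if_ray[where y = y]) auto
    then show False using x by simp
  qed
qed

section \<open>Logarithmic coordinates\<close>

definition exp_vec :: "real ^ 'n \<Rightarrow> complex ^ 'n" where
  "exp_vec y = (\<chi> i. complex_of_real (exp (y $ i)))"

definition of_nat_vec :: "nat ^ 'n \<Rightarrow> real ^ 'n" where
  "of_nat_vec b = (\<chi> i. real (b $ i))"

lemma newton_body_eq_legendre_domain:
  "newton_body \<phi> = legendre_domain (\<lambda>y. \<phi> (exp_vec y))"
  by (simp add: newton_body_def legendre_domain_def exp_vec_def)

lemma newton_polytope_eq_convex_hull:
  "newton_polytope r b = convex hull ((\<lambda>j. of_nat_vec (b j)) ` {1..r})"
  by (simp add: newton_polytope_def of_nat_vec_def)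

lemma toric_psh_exp_vec_mono:
  assumes psh: "psh_on unit_polydisc \<phi>" and toric: "toric_on unit_polydisc \<phi>"
    and y: "y \<in> negorthant" and le: "\<And>i. y' $ i \<le> y $ i"
  shows "\<phi> (exp_vec y') \<le> \<phi> (exp_vec y)"
  unfolding exp_vec_def
proof (rule toric_psh_mono[OF psh toric])
  fix i
  show "0 \<le> exp (y' $ i)" by simp
  show "exp (y' $ i) \<le> exp (y $ i)" using le[of i] by simp
  show "exp (y $ i) < 1" using y by (simp add: negorthant_def)
qed

lemma monomial_sq_exp_vec: "monomial_sq b (exp_vec y) = exp (2 * (of_nat_vec b \<bullet> y))"
proof -
  have "monomial_sq b (exp_vec y) = (\<Prod>i\<in>UNIV. exp (2 * (real (b $ i) * y $ i)))"
    unfolding monomial_sq_def exp_vec_def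
    by (intro prod.cong refl) (simp add: exp_of_nat_mult[symmetric] mult.commute mult.left_commute)
  also have "\<dots> = exp (2 * (of_nat_vec b \<bullet> y))"
    by (simp add: exp_sum inner_vec_def of_nat_vec_def sum_distrib_left)
  finally show ?thesis .
qed

lemma exp_vec_near_zero:
  assumes "0 < \<epsilon>"
  shows "\<exists>s0>0. \<forall>y::real ^ 'n. (\<forall>i. y $ i \<le> - s0) \<longrightarrow>
           exp_vec y \<in> unit_polydisc \<and> norm (exp_vec y) < \<epsilon>"
proof (intro exI conjI allI impI)
  define \<eta> where "\<eta> = min (1 / 2) (\<epsilon> / (2 * CARD('n)))"
  have \<eta>: "0 < \<eta>" "\<eta> < 1" "CARD('n) * \<eta> < \<epsilon>"
    using assms by (auto simp: \<eta>_def min_def field_simps)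
  show "0 < - ln \<eta>" using \<eta> by simp
  fix y :: "real ^ 'n" assume y: "\<forall>i. y $ i \<le> - (- ln \<eta>)"
  then have exp_y: "exp (y $ i) \<le> \<eta>" for i
    using \<eta>(1) by (simp add: ln_ge_iff[symmetric])
  have "norm (exp_vec y) \<le> (\<Sum>i\<in>UNIV. norm (exp_vec y $ i))"
    unfolding norm_vec_def by (rule L2_set_le_sum) simp
  also have "\<dots> \<le> CARD('n) * \<eta>"
    using sum_mono[of UNIV "\<lambda>i. norm (exp_vec y $ i)" "\<lambda>_. \<eta>"] exp_y by (simp add: exp_vec_def)
  finally show "norm (exp_vec y) < \<epsilon>" using \<eta>(3) by simp
  show "exp_vec y \<in> unit_polydisc"
  proof -
    have "exp (y $ i) < 1" for i using exp_y[of i] \<eta>(2) by linarith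
    then show ?thesis by (simp add: exp_vec_def unit_polydisc_def)
  qed
qed

lemma ln_sum_exp_ge:
  fixes f :: "'a \<Rightarrow> real"
  assumes "finite J" "j \<in> J"
  shows "f j \<le> ln (\<Sum>j\<in>J. exp (f j))"
proof -
  have "exp (f j) \<le> (\<Sum>j\<in>J. exp (f j))"
    using assms by (intro member_le_sum) auto
  from ln_mono[OF this exp_gt_zero] show ?thesis by simp
qed

lemma ln_sum_exp_le:
  fixes f :: "'a \<Rightarrow> real"
  assumes "finite J" "J \<noteq> {}"
  shows "\<exists>j\<in>J. ln (\<Sum>j\<in>J. exp (f j)) \<le> f j + ln (card J)"
proof -
  define m where "m = Max (f ` J)"
  have "m \<in> f ` J" using assms by (simp add: m_def)
  then obtain j where j: "j \<in> J" "f j = m" by blast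
  have "(\<Sum>i\<in>J. exp (f i)) \<le> (\<Sum>i\<in>J. exp m)"
    using assms by (intro sum_mono) (simp add: m_def)
  also have "\<dots> = card J * exp m" by simp
  finally have "ln (\<Sum>i\<in>J. exp (f i)) \<le> ln (card J * exp m)"
    using assms by (intro ln_mono sum_pos) auto
  also have "\<dots> = f j + ln (card J)"
    using assms j by (simp add: ln_mult card_gt_0_iff)
  finally show ?thesis using j(1) by blast
qed

lemma log_model_exp_vec:
  assumes "1 \<le> r"
  shows "log_model c r b (exp_vec y) = ereal (c / 2 * ln (\<Sum>j=1..r. exp (2 * (of_nat_vec (b j) \<bullet> y))))"
proof -
  have "(\<Sum>j=1..r. exp (2 * (of_nat_vec (b j) \<bullet> y))) > 0"
    using assms by (intro sum_pos) auto
  then show ?thesis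
    unfolding log_model_def by (simp add: monomial_sq_exp_vec Let_def)
qed

lemma log_model_exp_vec_ge:
  assumes "0 \<le> c" "1 \<le> r" "j \<in> {1..r}"
  shows "ereal (c * (of_nat_vec (b j) \<bullet> y)) \<le> log_model c r b (exp_vec y)"
proof -
  have "2 * (of_nat_vec (b j) \<bullet> y) \<le> ln (\<Sum>j=1..r. exp (2 * (of_nat_vec (b j) \<bullet> y)))"
    using assms(3) by (rule ln_sum_exp_ge[OF finite_atLeastAtMost])
  then have "c / 2 * (2 * (of_nat_vec (b j) \<bullet> y))
      \<le> c / 2 * ln (\<Sum>j=1..r. exp (2 * (of_nat_vec (b j) \<bullet> y)))"
    using assms(1) by (intro mult_left_mono) auto
  then show ?thesis by (simp add: log_model_exp_vec[OF assms(2)])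
qed

lemma log_model_exp_vec_le:
  assumes "0 \<le> c" "1 \<le> r"
  shows "\<exists>j\<in>{1..r}. log_model c r b (exp_vec y) \<le> ereal (c * (of_nat_vec (b j) \<bullet> y) + c / 2 * ln r)"
proof -
  obtain j where j: "j \<in> {1..r}" and
    "ln (\<Sum>j=1..r. exp (2 * (of_nat_vec (b j) \<bullet> y))) \<le> 2 * (of_nat_vec (b j) \<bullet> y) + ln r"
    using ln_sum_exp_le[of "{1..r}"] assms(2) by fastforce
  then have "log_model c r b (exp_vec y) \<le> ereal (c * (of_nat_vec (b j) \<bullet> y) + c / 2 * ln r)"
    using assms(1) mult_left_mono[of _ _ "c / 2"] by (fastforce simp: log_model_exp_vec[OF assms(2)] algebra_simps)
  with j show ?thesis by blast
qed

lemma exp_vec_tropical_bounds: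
  fixes \<phi> :: "complex ^ 'n \<Rightarrow> ereal"
  assumes c: "0 < c" and r: "1 \<le> r"
    and near0: "\<exists>\<epsilon>>0. \<exists>C::real. \<forall>z\<in>unit_polydisc. norm z < \<epsilon> \<longrightarrow>
                  \<phi> z \<le> log_model c r b z + ereal C \<and> log_model c r b z \<le> \<phi> z + ereal C"
  shows "\<exists>s0>0. \<exists>C. \<forall>y :: real ^ 'n. (\<forall>i. y $ i \<le> - s0) \<longrightarrow>
           (\<forall>p\<in>(\<lambda>j. of_nat_vec (b j)) ` {1..r}. ereal (c * (p \<bullet> y)) \<le> \<phi> (exp_vec y) + ereal C) \<and>
           (\<exists>p\<in>(\<lambda>j. of_nat_vec (b j)) ` {1..r}. \<phi> (exp_vec y) \<le> ereal (c * (p \<bullet> y) + C))"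
proof -
  obtain \<epsilon> C where \<epsilon>: "\<epsilon> > 0" and near: "\<And>z. z \<in> unit_polydisc \<Longrightarrow> norm z < \<epsilon> \<Longrightarrow>
      \<phi> z \<le> log_model c r b z + ereal C \<and> log_model c r b z \<le> \<phi> z + ereal C"
    using near0 by blast
  obtain s0 where "s0 > 0" and small: "\<And>y :: real ^ 'n. (\<And>i. y $ i \<le> - s0) \<Longrightarrow>
      exp_vec y \<in> unit_polydisc \<and> norm (exp_vec y) < \<epsilon>"
    using exp_vec_near_zero[OF \<epsilon>] by blast
  define C' where "C' = C + c / 2 * ln r"
  have "C \<le> C'" using c r by (simp add: C'_def)
  have "(\<forall>p\<in>(\<lambda>j. of_nat_vec (b j)) ` {1..r}. ereal (c * (p \<bullet> y)) \<le> \<phi> (exp_vec y) + ereal C') \<and>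
        (\<exists>p\<in>(\<lambda>j. of_nat_vec (b j)) ` {1..r}. \<phi> (exp_vec y) \<le> ereal (c * (p \<bullet> y) + C'))"
    if y_small: "\<forall>i. y $ i \<le> - s0" for y :: "real ^ 'n"
  proof (intro conjI ballI, elim imageE)
    fix p j assume p: "p = of_nat_vec (b j)" and "j \<in> {1..r}"
    then have "ereal (c * (p \<bullet> y)) \<le> log_model c r b (exp_vec y)"
      using c unfolding p by (intro log_model_exp_vec_ge r) simp
    also have "\<dots> \<le> \<phi> (exp_vec y) + ereal C" using near small y_small by blast
    also have "\<dots> \<le> \<phi> (exp_vec y) + ereal C'" using \<open>C \<le> C'\<close> by (intro add_left_mono) simp
    finally show "ereal (c * (p \<bullet> y)) \<le> \<phi> (exp_vec y) + ereal C'" .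
  next
    obtain j where j: "j \<in> {1..r}"
      and log_le: "log_model c r b (exp_vec y) \<le> ereal (c * (of_nat_vec (b j) \<bullet> y) + c / 2 * ln r)"
      using log_model_exp_vec_le[of c r b y] c r by auto
    have "\<phi> (exp_vec y) \<le> log_model c r b (exp_vec y) + ereal C"
      using near small y_small by blast
    also have "log_model c r b (exp_vec y) + ereal C
        \<le> ereal (c * (of_nat_vec (b j) \<bullet> y) + c / 2 * ln r) + ereal C"
      using log_le by (rule add_right_mono)
    finally have "\<phi> (exp_vec y) \<le> ereal (c * (of_nat_vec (b j) \<bullet> y) + C')"
      by (simp add: C'_def algebra_simps)
    with j show "\<exists>p\<in>(\<lambda>j. of_nat_vec (b j)) ` {1..r}. \<phi> (exp_vec y) \<le> ereal (c * (p \<bullet> y) + C')"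
      by blast
  qed
  with \<open>s0 > 0\<close> show ?thesis by blast
qed

theorem proposition3p5:
  fixes \<phi> :: "complex ^ 'n \<Rightarrow> ereal" and c :: real and r :: nat and b :: "nat \<Rightarrow> nat ^ 'n"
  assumes psh: "psh_on unit_polydisc \<phi>"
    and toric: "toric_on unit_polydisc \<phi>"
    and c_pos: "c > 0"
    and r_pos: "r \<ge> 1"
    and near0: "\<exists>\<epsilon>>0. \<exists>C::real. \<forall>z\<in>unit_polydisc. norm z < \<epsilon> \<longrightarrow>
                  \<phi> z \<le> log_model c r b z + ereal C \<and> log_model c r b z \<le> \<phi> z + ereal C"
  shows "newton_body \<phi> = {c *\<^sub>R p + q | p q. p \<in> newton_polytope r b \<and> (\<forall>i. q $ i \<ge> 0)}"
proof -
  define B where "B = (\<lambda>j. of_nat_vec (b j)) ` {1..r}"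
  obtain s0 C where "s0 > 0" and bounds: "\<forall>y :: real ^ 'n. (\<forall>i. y $ i \<le> - s0) \<longrightarrow>
      (\<forall>p\<in>B. ereal (c * (p \<bullet> y)) \<le> \<phi> (exp_vec y) + ereal C) \<and>
      (\<exists>p\<in>B. \<phi> (exp_vec y) \<le> ereal (c * (p \<bullet> y) + C))"
    using exp_vec_tropical_bounds[OF c_pos r_pos near0] unfolding B_def by blast
  have B: "finite B" "B \<noteq> {}" "\<And>p i. p \<in> B \<Longrightarrow> 0 \<le> p $ i"
    using r_pos by (auto simp: B_def of_nat_vec_def)
  have lower: "ereal (c * (p \<bullet> y)) \<le> \<phi> (exp_vec y) + ereal C"
    if "\<And>i. y $ i \<le> - s0" "p \<in> B" for y p
    using bounds that by blast
  have upper: "\<exists>p\<in>B. \<phi> (exp_vec y) \<le> ereal (c * (p \<bullet> y) + C)" if "\<And>i. y $ i \<le> - s0" for y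
    using bounds that by blast
  have "legendre_domain (\<lambda>y. \<phi> (exp_vec y))
      \<subseteq> {c *\<^sub>R p + q | p q. p \<in> convex hull B \<and> (\<forall>i. 0 \<le> q $ i)}"
    by (rule legendre_domain_subset_scaled_hull_plus_orthant[OF B upper c_pos \<open>s0 > 0\<close>])
  moreover have "{c *\<^sub>R p + q | p q. p \<in> convex hull B \<and> (\<forall>i. 0 \<le> q $ i)}
      \<subseteq> legendre_domain (\<lambda>y. \<phi> (exp_vec y))"
    using c_pos \<open>s0 > 0\<close>
    by (intro scaled_hull_plus_orthant_subset_legendre_domain[OF toric_psh_exp_vec_mono[OF psh toric] lower]) auto
  ultimately show ?thesis
    by (simp add: newton_body_eq_legendre_domain newton_polytope_eq_convex_hull B_def)
qed

end
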